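(* Let $n\in\mathbb{N}_0$ and for $z,w\in\mathbb{C}$ with $z\neq w$ define $$H_n(z,w)=\frac{|z|^{2n}}{|z-w|^{2n}}e^{-\pi(|z|^2-|z-w|^2)}.$$ Let $R>0$, $w=R/2$, and $z=re^{i\varphi}$ with $r\ge R$ and $|\varphi|\le\pi/5$. Then $$H_n(z,w)\le 4^n e^{-\pi R^2/2}.$$
   Context: For $n=0$ the factor $|z|^{2n}/|z-w|^{2n}$ equals $1$. *)

theory Defs
  imports "HOL-Analysis.Analysis"
begin

definition H :: "nat \<Rightarrow> complex \<Rightarrow> complex \<Rightarrow> real" where
  "H n z w = (cmod z) ^ (2*n) / (cmod (z - w)) ^ (2*n)
             * exp (- pi * ((cmod z)^2 - (cmod (z - w))^2))"

end

theory Submission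
  imports Defs
begin

text \<open>
  With \<open>w = R/2\<close> and \<open>c = cos \<phi>\<close> the law of cosines gives \<open>|z|\<^sup>2 = r\<^sup>2\<close> and
  \<open>|z - w|\<^sup>2 = r\<^sup>2 - r R c + R\<^sup>2/4\<close>. For \<open>|\<phi>| \<le> \<pi>/5\<close> we have \<open>3/4 \<le> c \<le> 1\<close>, so
  \<open>4|z - w|\<^sup>2 - |z|\<^sup>2 \<ge> (3r - R)(r - R) \<ge> 0\<close> bounds the quotient by 4, and
  \<open>|z|\<^sup>2 - |z - w|\<^sup>2 = r R c - R\<^sup>2/4 \<ge> R\<^sup>2/2\<close> bounds the exponential factor.
\<close>

lemma cos_ge_one_minus_half_square: "1 - x\<^sup>2 / 2 \<le> cos (x :: real)"
proof -
  have "(sin (x/2))\<^sup>2 \<le> (x/2)\<^sup>2"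
    using abs_sin_x_le_abs_x[of "x/2"] by (metis abs_ge_zero power2_abs power_mono)
  then show ?thesis
    using cos_double_sin[of "x/2"] by (simp add: power_divide)
qed

lemma cos_ge_three_quarters:
  assumes "\<bar>x\<bar> \<le> pi / 5"
  shows "3/4 \<le> cos x"
proof -
  have "\<bar>x\<bar> \<le> 16/25" using assms pi_approx(2) by simp
  then have "x\<^sup>2 \<le> (16/25)\<^sup>2"
    by (metis abs_ge_zero power2_abs power_mono)
  then show ?thesis
    using cos_ge_one_minus_half_square[of x] by (simp add: power2_eq_square)
qed

lemma cmod_polar_minus_real_power2:
  "(cmod (of_real r * exp (\<i> * of_real \<phi>) - of_real a))\<^sup>2 = r\<^sup>2 - 2 * a * r * cos \<phi> + a\<^sup>2"
proof -
  have "(cmod (of_real r * exp (\<i> * of_real \<phi>) - of_real a))\<^sup>2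
          = (r * cos \<phi> - a)\<^sup>2 + (r * sin \<phi>)\<^sup>2"
    by (simp add: cmod_power2 exp_Euler cos_of_real sin_of_real)
  also have "\<dots> = r\<^sup>2 * ((cos \<phi>)\<^sup>2 + (sin \<phi>)\<^sup>2) - 2 * a * r * cos \<phi> + a\<^sup>2"
    by algebra
  finally show ?thesis by simp
qed

lemma H_le_power_exp:
  assumes "z \<noteq> w"
    and "(cmod z)\<^sup>2 \<le> q * (cmod (z - w))\<^sup>2"
    and "d \<le> (cmod z)\<^sup>2 - (cmod (z - w))\<^sup>2"
  shows "H n z w \<le> q ^ n * exp (- pi * d)"
proof -
  have pos: "0 < (cmod (z - w))\<^sup>2" using assms(1) by simp
  have "(cmod z)\<^sup>2 / (cmod (z - w))\<^sup>2 \<le> q"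
    using assms(2) pos by (simp add: divide_le_eq)
  then have "((cmod z)\<^sup>2 / (cmod (z - w))\<^sup>2) ^ n \<le> q ^ n"
    by (intro power_mono) auto
  moreover have "exp (- pi * ((cmod z)\<^sup>2 - (cmod (z - w))\<^sup>2)) \<le> exp (- pi * d)"
    using assms(3) by simp
  moreover have "exp (- pi * ((cmod z)\<^sup>2 - (cmod (z - w))\<^sup>2)) \<ge> 0"
    by simp
  moreover have "H n z w = ((cmod z)\<^sup>2 / (cmod (z - w))\<^sup>2) ^ n
                             * exp (- pi * ((cmod z)\<^sup>2 - (cmod (z - w))\<^sup>2))"
    unfolding H_def by (simp add: power_mult power_divide)
  ultimately show ?thesis
    by (simp add: mult_mono')
qed

theorem lemma2:
  fixes n :: nat and R r \<phi> :: real and z w :: complex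
  assumes "R > 0"
    and "w = complex_of_real (R / 2)"
    and "z = complex_of_real r * exp (\<i> * complex_of_real \<phi>)"
    and "r \<ge> R"
    and "\<bar>\<phi>\<bar> \<le> pi / 5"
  shows "H n z w \<le> 4 ^ n * exp (- pi * R^2 / 2)"
proof -
  define c where "c = cos \<phi>"
  have c: "3/4 \<le> c" "c \<le> 1"
    using cos_ge_three_quarters[OF assms(5)] by (simp_all add: c_def)
  have z: "(cmod z)\<^sup>2 = r\<^sup>2"
    using cmod_polar_minus_real_power2[of r \<phi> 0] by (simp add: assms(3))
  have zw: "(cmod (z - w))\<^sup>2 = r\<^sup>2 - r * R * c + R\<^sup>2 / 4"
    using cmod_polar_minus_real_power2[of r \<phi> "R/2"]
    by (simp add: assms(2,3) c_def power_divide)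
  have products: "R * R \<le> r * R" "r * R * c \<le> r * R" "r * R * (3/4) \<le> r * R * c"
    using assms(1,4) c by (simp_all add: mult_right_mono)
  have "0 \<le> (3 * r - R) * (r - R)"
    using assms(1,4) by simp
  then have quotient: "(cmod z)\<^sup>2 \<le> 4 * (cmod (z - w))\<^sup>2"
    unfolding z zw using products by (simp add: power2_eq_square algebra_simps)
  have difference: "R\<^sup>2 / 2 \<le> (cmod z)\<^sup>2 - (cmod (z - w))\<^sup>2"
    unfolding z zw using products by (simp add: power2_eq_square algebra_simps)
  have "z \<noteq> w"
    using quotient z assms(1,4) by (auto simp: power2_eq_square mult_le_0_iff)
  then show ?thesis
    using H_le_power_exp[OF _ quotient difference, of n] by simp
qed

end
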